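(* There is a constant $K_0>1$ such that for every fixed $K\ge K_0$ there is a constant $a=a(K)>0$ with the following property: for all $0<r\le\sqrt2$, setting $d=K\max(r,1/\sqrt2)$, we have $A(d,r)\ge a\,r^5$.
   Context: $B(z,\rho)$ denotes the closed Euclidean ball in $\mathbb{R}^2$. For $x,y\in\mathbb{R}^2$ and $r>0$, $W(x,y;r):=\{z\in\mathbb{R}^2: B(z,r)\supseteq B(x,r)\cap B(y,\|x-y\|)\}$. Its area depends only on $\|x-y\|$ and $r$; $A(d,r)$ denotes the area of $W(x,y;r)$ for any $x,y$ with $\|x-y\|=d$. *)

theory Defs
  imports "HOL-Analysis.Analysis"
begin

definition W :: "real^2 \<Rightarrow> real^2 \<Rightarrow> real \<Rightarrow> (real^2) set" where
  "W x y r = {z. cball x r \<inter> cball y (dist x y) \<subseteq> cball z r}"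

text \<open>A(d,r): area of W(x,y;r) for any x,y with |x-y| = d (independent of the choice).
  The theorem is stated for all such x,y, so no representative is fixed here.\<close>

end

theory Submission
  imports Defs
begin

(* Put x at the origin, let D = y - x (so |D| = d = dist x y) and let E be D
   rotated by a right angle.  Write c = r/d \<le> 1.  A centre z = x + \<alpha>D + \<beta>E with
   c\<^sup>2/4 \<le> \<alpha> \<le> c\<^sup>2/2 and |\<beta>| \<le> c\<^sup>3/32 lies in W(x,y;r): for every point p of the lens
   B(x,r) \<inter> B(y,d) one expands |z - p|\<^sup>2 in the orthogonal frame (D,E) and bounds it by
   r\<^sup>2 using only |p - x| \<le> r and |p - y| \<le> d (lemma lens_point_inequality).
   The image of this parameter rectangle under the affine map v \<mapsto> x + v$1 D + v$2 E has
   area d\<^sup>2 \<cdot> (c\<^sup>2/4) \<cdot> (c\<^sup>3/16) = r\<^sup>5/(64 d\<^sup>3), giving the general bound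
   A(d,r) \<ge> r\<^sup>5/(64 d\<^sup>3) whenever 0 < r \<le> d (lemma measure_W_lower_bound). *)

text \<open>Here \<open>\<rho> = |p - x|\<close>,
  \<open>g = D\<bullet>(p - x)\<close>, \<open>h = E\<bullet>(p - x)\<close>; the hypothesis \<open>\<rho>\<^sup>2 \<le> 2g\<close> encodes \<open>|p - y| \<le> d\<close>, and the
  left-hand side of the conclusion is \<open>|x + \<alpha>D + \<beta>E - p|\<^sup>2\<close>.\<close>
lemma lens_point_inequality:
  fixes c d \<alpha> \<beta> \<rho> g h :: real
  assumes c: "0 < c" "c \<le> 1" and d: "0 < d"
    and \<rho>: "0 \<le> \<rho>" "\<rho> \<le> c * d" and g: "\<rho>\<^sup>2 \<le> 2 * g" and h: "\<bar>h\<bar> \<le> \<rho> * d"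
    and \<alpha>: "c\<^sup>2 / 4 \<le> \<alpha>" "\<alpha> \<le> c\<^sup>2 / 2" and \<beta>: "\<bar>\<beta>\<bar> \<le> c ^ 3 / 32"
  shows "\<rho>\<^sup>2 - 2 * \<alpha> * g - 2 * \<beta> * h + (\<alpha>\<^sup>2 + \<beta>\<^sup>2) * d\<^sup>2 \<le> (c * d)\<^sup>2"
proof -
  have c2: "c\<^sup>2 \<le> 1" using c by (simp add: power_le_one)
  have \<alpha>0: "0 \<le> \<alpha>" "\<alpha> \<le> 1" using \<alpha> c2 zero_le_power2[of c] by linarith+
  have radial: "\<rho>\<^sup>2 - 2 * \<alpha> * g \<le> (c * d)\<^sup>2 * (1 - \<alpha>)"
  proof -
    have "\<alpha> * \<rho>\<^sup>2 \<le> 2 * \<alpha> * g" using mult_left_mono[OF g \<alpha>0(1)] by simp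
    moreover have "\<rho>\<^sup>2 * (1 - \<alpha>) \<le> (c * d)\<^sup>2 * (1 - \<alpha>)"
      using \<rho> \<alpha>0 by (intro mult_right_mono power_mono) auto
    ultimately show ?thesis by (simp add: algebra_simps)
  qed
  have tangential: "- (2 * \<beta> * h) \<le> c ^ 4 * d\<^sup>2 / 16"
  proof -
    have "\<bar>h\<bar> \<le> c * d * d" using h \<rho> d by (meson mult_right_mono less_imp_le order_trans)
    hence "\<bar>\<beta>\<bar> * \<bar>h\<bar> \<le> (c ^ 3 / 32) * (c * d * d)" using \<beta> c by (intro mult_mono) auto
    moreover have "(c ^ 3 / 32) * (c * d * d) = c ^ 4 * d\<^sup>2 / 32"
      by (simp add: power2_eq_square eval_nat_numeral)
    ultimately show ?thesis using abs_mult[of \<beta> h] abs_ge_self[of "\<beta> * h"] by linarith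
  qed
  have quadratic: "(\<alpha>\<^sup>2 + \<beta>\<^sup>2) * d\<^sup>2 \<le> (\<alpha> * c\<^sup>2 / 2 + c ^ 6 / 1024) * d\<^sup>2"
  proof -
    have "\<alpha>\<^sup>2 \<le> \<alpha> * (c\<^sup>2 / 2)" using mult_left_mono[OF \<alpha>(2) \<alpha>0(1)] by (simp add: power2_eq_square)
    moreover have "\<beta>\<^sup>2 \<le> (c ^ 3 / 32)\<^sup>2" using \<beta> by (metis abs_ge_zero power2_abs power_mono)
    ultimately show ?thesis by (intro mult_right_mono) (auto simp: power_divide power_mult[symmetric])
  qed
  have gain: "c ^ 4 / 16 + c ^ 6 / 1024 \<le> \<alpha> * c\<^sup>2 / 2"
  proof -
    have "c ^ 6 \<le> c ^ 4" using c by (simp add: power_decreasing)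
    moreover have "c ^ 4 / 8 \<le> \<alpha> * c\<^sup>2 / 2"
      using mult_right_mono[OF \<alpha>(1) zero_le_power2[of c]] by (simp add: eval_nat_numeral)
    ultimately show ?thesis using zero_le_power[of c 4] c by linarith
  qed
  have "\<rho>\<^sup>2 - 2 * \<alpha> * g - 2 * \<beta> * h + (\<alpha>\<^sup>2 + \<beta>\<^sup>2) * d\<^sup>2
      \<le> (c * d)\<^sup>2 - (\<alpha> * c\<^sup>2 / 2 - c ^ 4 / 16 - c ^ 6 / 1024) * d\<^sup>2"
    using radial tangential quadratic by (simp add: algebra_simps power_mult_distrib)
  also have "\<dots> \<le> (c * d)\<^sup>2" using gain by simp
  finally show ?thesis .
qed

definition perp :: "real^2 \<Rightarrow> real^2" where
  "perp D = vector [-(D$2), D$1]"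

definition frame :: "real^2 \<Rightarrow> real^2 \<Rightarrow> real^2" where
  "frame D v = (v$1) *\<^sub>R D + (v$2) *\<^sub>R perp D"

lemma inner_perp: "inner (perp D) (perp D) = inner D D" "inner D (perp D) = 0"
  unfolding perp_def by (simp_all add: inner_vec_def sum_2 algebra_simps)

lemma linear_frame: "linear (frame D)"
  unfolding frame_def by (auto intro!: linearI simp: algebra_simps)

lemma measure_frame_box:
  assumes "a$1 \<le> b$1" "a$2 \<le> b$2"
  shows "measure lebesgue ((\<lambda>v. x + frame D v) ` cbox a b)
       = (norm D)\<^sup>2 * ((b$1 - a$1) * (b$2 - a$2))"
proof -
  have "(norm D)\<^sup>2 = D$1 * D$1 + D$2 * D$2"
    by (simp add: power2_norm_eq_inner inner_vec_def sum_2)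
  hence det: "det (matrix (frame D)) = (norm D)\<^sup>2"
    by (simp add: det_2 matrix_def frame_def perp_def axis_def)
  have "a \<in> cbox a b" using assms by (simp add: mem_box_cart forall_2)
  hence "cbox a b \<noteq> {}" by blast
  hence box: "measure lebesgue (cbox a b) = (b$1 - a$1) * (b$2 - a$2)"
    by (simp add: content_cbox_cart UNIV_2)
  have "(\<lambda>v. x + frame D v) ` cbox a b = (+) x ` (frame D ` cbox a b)" by auto
  hence "measure lebesgue ((\<lambda>v. x + frame D v) ` cbox a b) = measure lebesgue (frame D ` cbox a b)"
    by (simp add: measure_translation)
  also have "\<dots> = \<bar>det (matrix (frame D))\<bar> * measure lebesgue (cbox a b)"
    by (rule measure_linear_image[OF linear_frame]) simp
  finally show ?thesis by (simp add: det box)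
qed

text \<open>W(x,y;r) is an intersection of closed balls contained in B(x,r), hence compact
  and Lebesgue measurable; this is needed to compare measures.\<close>
lemma W_lmeasurable:
  assumes "0 \<le> r"
  shows "W x y r \<in> lmeasurable"
proof -
  have "W x y r = (\<Inter>p\<in>cball x r \<inter> cball y (dist x y). cball p r)"
    unfolding W_def by (auto simp: dist_commute)
  hence "closed (W x y r)" by (simp add: closed_INT)
  moreover have "W x y r \<subseteq> cball x r"
  proof
    fix z assume "z \<in> W x y r"
    moreover have "x \<in> cball x r \<inter> cball y (dist x y)" using assms by (simp add: dist_commute)
    ultimately have "x \<in> cball z r" unfolding W_def by blast
    thus "z \<in> cball x r" by (simp add: dist_commute)
  qed
  hence "bounded (W x y r)" using bounded_cball bounded_subset by blast
  ultimately show ?thesis by (intro lmeasurable_compact) (simp add: compact_eq_bounded_closed)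
qed

lemma frame_point_in_W:
  fixes x y :: "real^2" and r :: real
  defines "c \<equiv> r / dist x y"
  assumes r: "0 < r" "r \<le> dist x y"
    and v1: "c\<^sup>2 / 4 \<le> v$1" "v$1 \<le> c\<^sup>2 / 2" and v2: "\<bar>v$2\<bar> \<le> c ^ 3 / 32"
  shows "x + frame (y - x) v \<in> W x y r"
  unfolding W_def
proof clarify
  fix p assume px: "p \<in> cball x r" and py: "p \<in> cball y (dist x y)"
  define D where "D = y - x"
  define d where "d = dist x y"
  define q where "q = p - x"
  have d: "0 < d" using r unfolding d_def by linarith
  have c: "0 < c" "c \<le> 1" and rc: "r = c * d" using r d by (simp_all add: c_def d_def)
  have DD: "inner D D = d\<^sup>2" "norm D = d"
    by (simp_all add: D_def d_def dist_norm norm_minus_commute power2_norm_eq_inner[symmetric])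
  have EE: "inner (perp D) (perp D) = d\<^sup>2" and DE: "inner D (perp D) = 0"
    using inner_perp[of D] DD by simp_all
  have nE: "norm (perp D) = d" using EE d by (simp add: norm_eq_sqrt_inner)
  have \<rho>: "norm q \<le> c * d" using px rc by (simp add: q_def dist_norm norm_minus_commute)
  have g: "(norm q)\<^sup>2 \<le> 2 * inner D q"
  proof -
    have "(norm (q - D))\<^sup>2 \<le> d\<^sup>2"
      using py by (intro power_mono) (simp_all add: q_def D_def d_def dist_norm norm_minus_commute)
    thus ?thesis using DD by (simp add: power2_norm_eq_inner inner_diff inner_commute)
  qed
  have h: "\<bar>inner (perp D) q\<bar> \<le> norm q * d"
    using Cauchy_Schwarz_ineq2[of "perp D" q] nE by (simp add: mult.commute)
  have expand: "(dist (x + frame D v) p)\<^sup>2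
      = (norm q)\<^sup>2 - 2 * v$1 * inner D q - 2 * v$2 * inner (perp D) q + ((v$1)\<^sup>2 + (v$2)\<^sup>2) * d\<^sup>2"
  proof -
    have "x + frame D v - p = (v$1 *\<^sub>R D + v$2 *\<^sub>R perp D) - q"
      by (simp add: frame_def q_def algebra_simps)
    thus ?thesis
      by (simp add: dist_norm power2_norm_eq_inner inner_diff inner_add inner_commute EE DE DD(1))
         (simp add: inner_commute[of "perp D" D] DE power2_eq_square algebra_simps)
  qed
  have "(dist (x + frame D v) p)\<^sup>2 \<le> r\<^sup>2"
    unfolding expand rc
    by (rule lens_point_inequality[OF c d norm_ge_zero \<rho> g h v1 v2])
  hence "dist (x + frame D v) p \<le> r" using r by (auto intro: power2_le_imp_le)
  thus "p \<in> cball (x + frame (y - x) v) r" by (simp add: D_def)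
qed

lemma measure_W_lower_bound:
  fixes x y :: "real^2"
  assumes r: "0 < r" "r \<le> dist x y"
  shows "r ^ 5 / (64 * (dist x y) ^ 3) \<le> measure lebesgue (W x y r)"
proof -
  define d where "d = dist x y"
  define c where "c = r / d"
  have d: "0 < d" using r unfolding d_def by linarith
  have c: "0 < c" using r d by (simp add: c_def)
  define a where "a = (vector [c\<^sup>2 / 4, - (c ^ 3 / 32)] :: real^2)"
  define b where "b = (vector [c\<^sup>2 / 2, c ^ 3 / 32] :: real^2)"
  define S where "S = (\<lambda>v. x + frame (y - x) v) ` cbox a b"
  have ab: "a$1 \<le> b$1" "a$2 \<le> b$2" using c by (simp_all add: a_def b_def)
  have "measure lebesgue S = d\<^sup>2 * ((c\<^sup>2 / 2 - c\<^sup>2 / 4) * (c ^ 3 / 32 + c ^ 3 / 32))"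
    using measure_frame_box[OF ab, of x "y - x"]
    by (simp add: S_def a_def b_def d_def dist_norm norm_minus_commute)
  also have "\<dots> = r ^ 5 / (64 * d ^ 3)"
    using d by (simp add: c_def field_simps eval_nat_numeral)
  finally have mS: "measure lebesgue S = r ^ 5 / (64 * d ^ 3)" .
  have "S \<subseteq> W x y r"
  proof
    fix z assume "z \<in> S"
    then obtain v where v: "v \<in> cbox a b" and z: "z = x + frame (y - x) v"
      unfolding S_def by blast
    have "a$1 \<le> v$1" "v$1 \<le> b$1" "a$2 \<le> v$2" "v$2 \<le> b$2"
      using v by (simp_all add: mem_box_cart)
    thus "z \<in> W x y r" unfolding z
      by (intro frame_point_in_W[OF r]) (simp_all add: a_def b_def c_def d_def abs_le_iff)
  qed
  moreover have "compact S"
    unfolding S_def using linear_frame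
    by (intro compact_continuous_image compact_cbox continuous_intros linear_continuous_on)
       (simp add: linear_conv_bounded_linear)
  ultimately have "measure lebesgue S \<le> measure lebesgue (W x y r)"
    using r by (intro measure_mono_fmeasurable W_lmeasurable) (auto intro: lmeasurable_compact fmeasurableD)
  thus ?thesis using mS by (simp add: d_def)
qed

text \<open>With \<open>d = K max(r, 1/\<surd>2)\<close>, \<open>K \<ge> 1\<close> and \<open>r \<le> \<surd>2\<close> we have \<open>r \<le> d \<le> K\<surd>2\<close>,
  and \<open>(K\<surd>2)\<^sup>3 = 2\<surd>2 K\<^sup>3 \<le> 3K\<^sup>3\<close>.\<close>
lemma distance_bounds:
  fixes K r d :: real
  assumes K: "1 \<le> K" and r: "0 < r" "r \<le> sqrt 2" and d: "d = K * max r (1 / sqrt 2)"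
  shows "r \<le> d" "d ^ 3 \<le> 3 * K ^ 3"
proof -
  show "r \<le> d" unfolding d using K r mult_right_mono[OF K, of "max r (1 / sqrt 2)"] by simp
  have "max r (1 / sqrt 2) \<le> sqrt 2" using r by (simp add: divide_le_eq)
  hence "d ^ 3 \<le> (K * sqrt 2) ^ 3"
    unfolding d using K r by (intro power_mono mult_left_mono) auto
  also have "\<dots> = K ^ 3 * (2 * sqrt 2)" by (simp add: power_mult_distrib power3_eq_cube)
  also have "\<dots> \<le> K ^ 3 * 3"
  proof -
    have "sqrt 2 \<le> 3 / 2" by (rule power2_le_imp_le) (auto simp: power2_eq_square)
    thus ?thesis using K by (intro mult_left_mono) auto
  qed
  finally show "d ^ 3 \<le> 3 * K ^ 3" by simp
qed

theorem mainTheorem11: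
  shows "\<exists>K0::real. K0 > 1 \<and>
    (\<forall>K\<ge>K0. \<exists>a::real. a > 0 \<and>
      (\<forall>r::real. 0 < r \<and> r \<le> sqrt 2 \<longrightarrow>
        (\<forall>x y :: real^2. dist x y = K * max r (1 / sqrt 2) \<longrightarrow>
           measure lebesgue (W x y r) \<ge> a * r ^ 5)))"
proof (rule exI[of _ 2], intro conjI allI impI)
  fix K :: real assume K: "2 \<le> K"
  show "\<exists>a>0. \<forall>r. 0 < r \<and> r \<le> sqrt 2 \<longrightarrow>
      (\<forall>x y :: real^2. dist x y = K * max r (1 / sqrt 2) \<longrightarrow> a * r ^ 5 \<le> measure lebesgue (W x y r))"
  proof (intro exI[of _ "1 / (192 * K ^ 3)"] conjI allI impI)
    fix r :: real and x y :: "real^2"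
    assume r: "0 < r \<and> r \<le> sqrt 2" and d: "dist x y = K * max r (1 / sqrt 2)"
    have rd: "r \<le> dist x y" and d3: "dist x y ^ 3 \<le> 3 * K ^ 3"
      using distance_bounds[of K r] K r d by auto
    have "1 / (192 * K ^ 3) * r ^ 5 \<le> r ^ 5 / (64 * dist x y ^ 3)"
    proof -
      have "0 < dist x y" using r rd by linarith
      hence "r ^ 5 / (192 * K ^ 3) \<le> r ^ 5 / (64 * dist x y ^ 3)"
        using d3 r K by (intro divide_left_mono) auto
      thus ?thesis by simp
    qed
    also have "\<dots> \<le> measure lebesgue (W x y r)"
      using measure_W_lower_bound r rd by blast
    finally show "1 / (192 * K ^ 3) * r ^ 5 \<le> measure lebesgue (W x y r)" .
  qed (use K in simp)
qed simp

end
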